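(* For $P$-a.e. $\omega$ the following holds: for every $\epsilon>0$ there exists $N_4(\omega,\epsilon)\in\mathbb N$ such that for every $n>N_4(\omega,\epsilon)$, $C_{Q_n(\omega)}\subset[-\epsilon,\epsilon]$.
   Context: Fix $m>1/2$. Let $c_m:=\left(\int_{\mathbb R}(1+x^2)^{-m}dx\right)^{-1}$ and let $\nu_m(dx):=c_m(1+x^2)^{-m}dx$ (the Pearson Type VII law $\mathrm{PVII}_m(0,1)$). Let $(X_n)_{n\ge1}$ be i.i.d. random variables on $(\Omega,\mathcal F,P)$ with law $\nu_m$. For $t\in\mathbb R$ let $L_n(t):=\frac1n\sum_{i=1}^n\log(1+(X_i-t)^2)$. Let $Q_n(\omega):=\frac1n\sum_{i=1}^n\delta_{X_i(\omega)}$ be the empirical distribution and $C_{Q_n(\omega)}:=\{t\in\mathbb R: L_n(t)(\omega)=\min_{s\in\mathbb R}L_n(s)(\omega)\}$ the set of minimizers of $L_n(\cdot)(\omega)$. *)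

theory Defs
  imports "HOL-Probability.Probability"
begin

definition pvii_const :: "real \<Rightarrow> real" where
  "pvii_const m = 1 / (\<integral>x. (1 + x\<^sup>2) powr (- m) \<partial>lborel)"

definition pvii_density :: "real \<Rightarrow> real \<Rightarrow> real" where
  "pvii_density m x = pvii_const m * (1 + x\<^sup>2) powr (- m)"

definition Ln :: "(nat \<Rightarrow> 'a \<Rightarrow> real) \<Rightarrow> nat \<Rightarrow> real \<Rightarrow> 'a \<Rightarrow> real" where
  "Ln X n t \<omega> = (1 / real n) * (\<Sum>i\<in>{1..n}. ln (1 + (X i \<omega> - t)\<^sup>2))"

definition minimizer_set :: "(nat \<Rightarrow> 'a \<Rightarrow> real) \<Rightarrow> nat \<Rightarrow> 'a \<Rightarrow> real set" where
  "minimizer_set X n \<omega> = {t. \<forall>s. Ln X n t \<omega> \<le> Ln X n s \<omega>}"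

end

theory Submission
  imports Defs
begin

text \<open>
  L_n(t) - L_n(0) is the empirical mean of the contrast log(1 + (X_i - t)^2) - log(1 + X_i^2).
  Because the density is even and strictly decreasing in |x|, the expected contrast is positive
  for every t \<noteq> 0. The contrast is bounded by |t| and 1-Lipschitz in t, so the strong law
  for bounded functions (Hoeffding plus Borel-Cantelli), applied at finitely many points of the
  compact set {\<epsilon> \<le> |t| \<le> T}, makes the empirical mean contrast positive on all of it
  eventually. For |t| \<ge> T positivity is deterministic as soon as more than two thirds of the
  observations lie in a fixed interval [-K, K], which the strong law also guarantees eventually.
  So eventually L_n(t) > L_n(0) whenever |t| \<ge> \<epsilon>.
\<close>

definition contrast :: "real \<Rightarrow> real \<Rightarrow> real" where
  "contrast x t = ln (1 + (x - t)\<^sup>2) - ln (1 + x\<^sup>2)"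

definition mean_contrast :: "(nat \<Rightarrow> real) \<Rightarrow> nat \<Rightarrow> real \<Rightarrow> real" where
  "mean_contrast x n t = (\<Sum>i=1..n. contrast (x i) t) / real n"

lemma ln_one_plus_square_lipschitz: "\<bar>ln (1 + a\<^sup>2) - ln (1 + b\<^sup>2)\<bar> \<le> \<bar>a - b\<bar>" for a b :: real
proof -
  have "((\<lambda>x. ln (1 + x\<^sup>2)) has_field_derivative 2 * x / (1 + x\<^sup>2)) (at x within UNIV)" for x :: real
    by (auto intro!: derivative_eq_intros simp: add_pos_nonneg field_simps)
  moreover have "norm (2 * x / (1 + x\<^sup>2)) \<le> 1" for x :: real
  proof -
    have "2 * \<bar>x\<bar> \<le> 1 + x\<^sup>2"
      using sum_squares_ge_zero[of "\<bar>x\<bar> - 1" 0] by (simp add: power2_eq_square algebra_simps)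
    then show ?thesis by (simp add: abs_mult add_pos_nonneg)
  qed
  ultimately show ?thesis
    using field_differentiable_bound[OF convex_UNIV, of "\<lambda>x. ln (1 + x\<^sup>2)" "\<lambda>x. 2 * x / (1 + x\<^sup>2)" 1 a b] by simp
qed

lemma peetre_inequality: "1 + x\<^sup>2 \<le> 2 * (1 + (x - t)\<^sup>2) * (1 + t\<^sup>2)" for x t :: real
proof -
  have "x\<^sup>2 \<le> 2 * (x - t)\<^sup>2 + 2 * t\<^sup>2"
    using sum_squares_ge_zero[of "x - 2 * t" 0] by (simp add: power2_eq_square algebra_simps)
  moreover have "0 \<le> (x - t)\<^sup>2 * t\<^sup>2" by simp
  ultimately show ?thesis by (simp add: algebra_simps power2_eq_square)
qed

lemma abs_contrast_le: "\<bar>contrast x t\<bar> \<le> \<bar>t\<bar>"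
  using ln_one_plus_square_lipschitz[of "x - t" x] by (simp add: contrast_def)

lemma contrast_lipschitz: "\<bar>contrast x t - contrast x s\<bar> \<le> \<bar>t - s\<bar>"
  using ln_one_plus_square_lipschitz[of "x - t" "x - s"] by (simp add: contrast_def abs_minus_commute)

lemma contrast_measurable [measurable]: "(\<lambda>x. contrast x t) \<in> borel_measurable borel"
  unfolding contrast_def by measurable

lemma contrast_ge: "- ln (2 * (1 + t\<^sup>2)) \<le> contrast x t"
proof -
  have pos: "0 < 1 + (x - t)\<^sup>2" "0 < 1 + t\<^sup>2" by (auto simp: add_pos_nonneg)
  have "ln (1 + x\<^sup>2) \<le> ln (2 * (1 + (x - t)\<^sup>2) * (1 + t\<^sup>2))"
    using peetre_inequality[of x t] by (simp add: add_pos_nonneg)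
  also have "\<dots> = ln ((1 + (x - t)\<^sup>2) * (2 * (1 + t\<^sup>2)))"
    by (simp only: ac_simps)
  also have "\<dots> = ln (1 + (x - t)\<^sup>2) + ln (2 * (1 + t\<^sup>2))"
    using pos by (intro ln_mult_pos) auto
  finally show ?thesis by (simp add: contrast_def)
qed

lemma contrast_ge_near:
  assumes "\<bar>x\<bar> \<le> K" "K \<le> \<bar>t\<bar>"
  shows "ln (1 + (\<bar>t\<bar> - K)\<^sup>2) - ln (1 + K\<^sup>2) \<le> contrast x t"
proof -
  have "0 \<le> \<bar>t\<bar> - K" "\<bar>t\<bar> - K \<le> \<bar>x - t\<bar>"
    using assms by arith+
  then have "(\<bar>t\<bar> - K)\<^sup>2 \<le> \<bar>x - t\<bar>\<^sup>2"
    by (intro power_mono)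
  moreover have "\<bar>x\<bar>\<^sup>2 \<le> K\<^sup>2"
    using assms(1) by (intro power_mono) auto
  ultimately have "ln (1 + (\<bar>t\<bar> - K)\<^sup>2) \<le> ln (1 + (x - t)\<^sup>2)" "ln (1 + x\<^sup>2) \<le> ln (1 + K\<^sup>2)"
    by (simp_all add: add_pos_nonneg)
  then show ?thesis by (simp add: contrast_def)
qed

lemma far_loss_lt_twice_near_gain:
  fixes K t :: real
  assumes "K \<ge> 0" and "K + 2 * (1 + K\<^sup>2)\<^sup>2 \<le> \<bar>t\<bar>"
  shows "ln (2 * (1 + t\<^sup>2)) < 2 * (ln (1 + (\<bar>t\<bar> - K)\<^sup>2) - ln (1 + K\<^sup>2))"
proof -
  define u where "u = \<bar>t\<bar> - K"
  define Q where "Q = 1 + K\<^sup>2"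
  have Q: "Q \<ge> 1" unfolding Q_def by simp
  have "4 * Q ^ 3 \<le> 4 * Q ^ 4"
    using Q by (simp add: power_increasing)
  also have "\<dots> \<le> u\<^sup>2"
    using assms Q by (simp add: u_def Q_def power_mono[of "2 * (1 + K\<^sup>2)\<^sup>2" "\<bar>t\<bar> - K" 2, simplified])
  finally have big: "4 * Q ^ 3 < 1 + u\<^sup>2" by linarith
  have "1 + t\<^sup>2 \<le> 2 * (1 + u\<^sup>2) * Q"
    using peetre_inequality[of "\<bar>t\<bar>" K] by (simp add: u_def Q_def)
  then have "2 * (1 + t\<^sup>2) * Q\<^sup>2 \<le> 2 * (2 * (1 + u\<^sup>2) * Q) * Q\<^sup>2"
    by (intro mult_right_mono mult_left_mono) auto
  also have "\<dots> = (4 * Q ^ 3) * (1 + u\<^sup>2)"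
    by (simp add: power2_eq_square power3_eq_cube)
  also have "\<dots> < (1 + u\<^sup>2) * (1 + u\<^sup>2)"
    using big by (intro mult_strict_right_mono) (auto simp: add_pos_nonneg)
  finally have "ln (2 * (1 + t\<^sup>2) * Q\<^sup>2) < ln ((1 + u\<^sup>2)\<^sup>2)"
    using Q by (simp add: power2_eq_square add_pos_nonneg)
  moreover have "ln (2 * (1 + t\<^sup>2) * Q\<^sup>2) = ln (2 * (1 + t\<^sup>2)) + 2 * ln Q"
    using Q by (simp add: ln_mult_pos ln_realpow add_pos_nonneg del: ln_mult)
  moreover have "ln ((1 + u\<^sup>2)\<^sup>2) = 2 * ln (1 + u\<^sup>2)"
    by (simp add: ln_realpow add_pos_nonneg)
  ultimately have "ln (2 * (1 + t\<^sup>2)) < 2 * (ln (1 + u\<^sup>2) - ln Q)"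
    by argo
  then show ?thesis by (simp only: u_def Q_def)
qed

lemma mean_contrast_lipschitz: "\<bar>mean_contrast x n t - mean_contrast x n s\<bar> \<le> \<bar>t - s\<bar>"
proof (cases "n = 0")
  case False
  have "\<bar>\<Sum>i=1..n. contrast (x i) t - contrast (x i) s\<bar> \<le> (\<Sum>i=1..n. \<bar>contrast (x i) t - contrast (x i) s\<bar>)"
    by (rule sum_abs)
  also have "\<dots> \<le> (\<Sum>i=1..n. \<bar>t - s\<bar>)"
    by (intro sum_mono contrast_lipschitz)
  finally have "\<bar>\<Sum>i=1..n. contrast (x i) t - contrast (x i) s\<bar> \<le> real n * \<bar>t - s\<bar>"
    by simp
  moreover have "mean_contrast x n t - mean_contrast x n s = (\<Sum>i=1..n. contrast (x i) t - contrast (x i) s) / real n"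
    by (simp add: mean_contrast_def sum_subtractf diff_divide_distrib)
  ultimately show ?thesis
    using False by (simp add: pos_divide_le_eq mult.commute)
qed (simp add: mean_contrast_def)

text \<open>An observation in [-K, K] gains at least a (contrast_ge_near), any other loses at most b
  (contrast_ge), and b < 2a once \<bar>t\<bar> is large; so a two-thirds majority in [-K, K] wins.\<close>
lemma mean_contrast_pos_far:
  assumes "K \<ge> 0" and majority: "(\<Sum>i=1..n. of_bool (\<bar>x i\<bar> \<le> K)) / real n > 2/3"
    and t: "K + 2 * (1 + K\<^sup>2)\<^sup>2 \<le> \<bar>t\<bar>"
  shows "mean_contrast x n t > 0"
proof -
  define a where "a = ln (1 + (\<bar>t\<bar> - K)\<^sup>2) - ln (1 + K\<^sup>2)"
  define b where "b = ln (2 * (1 + t\<^sup>2))"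
  define N where "N = (\<Sum>i=1..n. of_bool (\<bar>x i\<bar> \<le> K) :: real)"
  have n: "real n > 0" using majority by (cases "n = 0") auto
  have N: "N > 2/3 * real n" using majority n unfolding N_def by (simp add: field_simps)
  have b: "0 \<le> b" "b < 2 * a"
    using far_loss_lt_twice_near_gain[OF assms(1) t] by (auto simp: a_def b_def add_pos_nonneg)
  have "K \<le> \<bar>t\<bar>" using t zero_le_power2[of "1 + K\<^sup>2"] by linarith
  then have "of_bool (\<bar>y\<bar> \<le> K) * a - (1 - of_bool (\<bar>y\<bar> \<le> K)) * b \<le> contrast y t" for y
    using contrast_ge_near[of y K t] contrast_ge[of t y] by (auto simp: a_def b_def)
  then have "(\<Sum>i=1..n. of_bool (\<bar>x i\<bar> \<le> K) * a - (1 - of_bool (\<bar>x i\<bar> \<le> K)) * b)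
      \<le> (\<Sum>i=1..n. contrast (x i) t)"
    by (intro sum_mono)
  moreover have "(\<Sum>i=1..n. of_bool (\<bar>x i\<bar> \<le> K) * a - (1 - of_bool (\<bar>x i\<bar> \<le> K)) * b)
      = N * a - (real n - N) * b"
    by (simp add: N_def sum_subtractf sum_distrib_right left_diff_distrib)
  moreover have "(real n - N) * b < N * a"
  proof -
    have "(real n - N) * b \<le> (N / 2) * b" using N b by (intro mult_right_mono) auto
    also have "\<dots> < (N / 2) * (2 * a)" using N n b by (intro mult_strict_left_mono) auto
    finally show ?thesis by simp
  qed
  ultimately show ?thesis using n by (simp add: mean_contrast_def)
qed

lemma Ln_diff_eq_mean_contrast: "Ln X n t \<omega> - Ln X n 0 \<omega> = mean_contrast (\<lambda>i. X i \<omega>) n t"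
  unfolding Ln_def mean_contrast_def contrast_def by (simp add: sum_subtractf diff_divide_distrib)

lemma minimizer_set_subset_if_mean_contrast_pos:
  assumes "\<And>t. \<epsilon> < \<bar>t\<bar> \<Longrightarrow> mean_contrast (\<lambda>i. X i \<omega>) n t > 0"
  shows "minimizer_set X n \<omega> \<subseteq> {-\<epsilon>..\<epsilon>}"
proof
  fix t assume "t \<in> minimizer_set X n \<omega>"
  then have "Ln X n t \<omega> \<le> Ln X n 0 \<omega>" by (simp add: minimizer_set_def)
  then have "\<not> mean_contrast (\<lambda>i. X i \<omega>) n t > 0" by (simp add: Ln_diff_eq_mean_contrast[symmetric])
  then have "\<bar>t\<bar> \<le> \<epsilon>" using assms[of t] by (meson not_less)
  then show "t \<in> {-\<epsilon>..\<epsilon>}" by (auto simp: abs_le_iff)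
qed

lemma integrable_mult_contrast:
  assumes f: "integrable lborel f"
  shows "integrable lborel (\<lambda>x. f x * contrast x t)"
proof (rule Bochner_Integration.integrable_bound[where f="\<lambda>x. \<bar>t\<bar> * f x"])
  show "integrable lborel (\<lambda>x. \<bar>t\<bar> * f x)" using f by simp
  show "(\<lambda>x. f x * contrast x t) \<in> borel_measurable lborel"
    using borel_measurable_integrable[OF f] by measurable
  have "\<bar>f x\<bar> * \<bar>contrast x t\<bar> \<le> \<bar>f x\<bar> * \<bar>t\<bar>" for x
    by (intro mult_left_mono abs_contrast_le) simp
  then show "AE x in lborel. norm (f x * contrast x t) \<le> norm (\<bar>t\<bar> * f x)"
    by (simp add: abs_mult mult.commute)
qed

lemma lborel_integral_pos:
  fixes h :: "real \<Rightarrow> real"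
  assumes h: "integrable lborel h" and pos: "\<And>x. x \<noteq> c \<Longrightarrow> h x > 0"
  shows "(\<integral>x. h x \<partial>lborel) > 0"
proof -
  have AE_pos: "AE x in lborel. h x > 0"
    using AE_lborel_singleton[of c] by (rule eventually_mono) (use pos in blast)
  have "\<not> (AE x in lborel. h x = 0)"
  proof
    assume "AE x in lborel. h x = 0"
    with AE_pos have "AE x::real in lborel. False"
      by eventually_elim simp
    then show False by (simp add: eventually_False ae_filter_eq_bot_iff)
  qed
  with h AE_pos have "(\<integral>x. h x \<partial>lborel) \<noteq> 0"
    by (subst integral_nonneg_eq_0_iff_AE) (auto elim: eventually_mono)
  moreover have "(\<integral>x. h x \<partial>lborel) \<ge> 0"
    using AE_pos by (intro integral_nonneg_AE) (auto elim: eventually_mono)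
  ultimately show ?thesis by linarith
qed

lemma integral_contrast_reflect:
  fixes f :: "real \<Rightarrow> real"
  assumes even: "\<And>x. f (- x) = f x"
  shows "(\<integral>x. f x * contrast x t \<partial>lborel) = - (\<integral>x. f (x - t) * contrast x t \<partial>lborel)"
proof -
  have "(\<integral>x. f x * contrast x t \<partial>lborel) = (\<integral>x. f (t - x) * contrast (t - x) t \<partial>lborel)"
    using lborel_integral_real_affine[of "-1" "\<lambda>x. f x * contrast x t" t] by simp
  also have "\<dots> = (\<integral>x. - (f (x - t) * contrast x t) \<partial>lborel)"
  proof -
    have "f (t - x) * contrast (t - x) t = - (f (x - t) * contrast x t)" for x
      using even[of "x - t"] by (simp add: contrast_def power2_commute algebra_simps)
    then show ?thesis by simp
  qed
  also have "\<dots> = - (\<integral>x. f (x - t) * contrast x t \<partial>lborel)"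
    by (rule integral_minus)
  finally show ?thesis .
qed

text \<open>By the reflection x \<mapsto> t - x, twice the integral is the integral of
  (f x - f (x - t)) * contrast x t, whose factors both have the sign of \<bar>x - t\<bar> - \<bar>x\<bar>.\<close>
lemma integral_contrast_pos:
  fixes f :: "real \<Rightarrow> real"
  assumes f: "integrable lborel f"
    and even: "\<And>x. f (- x) = f x" and decreasing: "\<And>x y. \<bar>x\<bar> < \<bar>y\<bar> \<Longrightarrow> f y < f x"
    and "t \<noteq> 0"
  shows "(\<integral>x. f x * contrast x t \<partial>lborel) > 0"
proof -
  define h where "h x = (f x - f (x - t)) * contrast x t" for x
  have "integrable lborel (\<lambda>x. f (x - t))"
    using lborel_integrable_real_affine_iff[of 1 f "- t"] f by simp
  then have int: "integrable lborel (\<lambda>x. f x * contrast x t)"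
      "integrable lborel (\<lambda>x. f (x - t) * contrast x t)"
    using f by (auto intro: integrable_mult_contrast)
  then have "integrable lborel h"
    unfolding h_def left_diff_distrib by simp
  have "(\<integral>x. h x \<partial>lborel) = 2 * (\<integral>x. f x * contrast x t \<partial>lborel)"
    unfolding h_def left_diff_distrib Bochner_Integration.integral_diff[OF int]
    using integral_contrast_reflect[of f t, OF even] by simp
  moreover have "(\<integral>x. h x \<partial>lborel) > 0"
  proof (rule lborel_integral_pos)
    show "integrable lborel h" by fact
    fix x assume "x \<noteq> t / 2"
    then have "\<bar>x\<bar> \<noteq> \<bar>x - t\<bar>" using \<open>t \<noteq> 0\<close> by (auto simp: abs_eq_iff)
    then consider "\<bar>x\<bar> < \<bar>x - t\<bar>" | "\<bar>x - t\<bar> < \<bar>x\<bar>" by linarith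
    then show "h x > 0"
    proof cases
      case 1
      then have "x\<^sup>2 < (x - t)\<^sup>2" by (meson abs_le_square_iff not_le)
      then have "contrast x t > 0" by (simp add: contrast_def add_pos_nonneg)
      with decreasing[OF 1] show ?thesis by (simp add: h_def)
    next
      case 2
      then have "(x - t)\<^sup>2 < x\<^sup>2" by (meson abs_le_square_iff not_le)
      then have "contrast x t < 0" by (simp add: contrast_def add_pos_nonneg)
      with decreasing[OF 2] show ?thesis by (simp add: h_def mult_neg_neg)
    qed
  qed
  ultimately show ?thesis by simp
qed

lemma (in prob_space) expectation_contrast_pos:
  fixes f :: "real \<Rightarrow> real"
  assumes Y: "distributed M lborel Y (\<lambda>x. ennreal (f x))" and "\<And>x. 0 \<le> f x"
    and "\<And>x. f (- x) = f x" and "\<And>x y. \<bar>x\<bar> < \<bar>y\<bar> \<Longrightarrow> f y < f x" and "t \<noteq> 0"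
  shows "expectation (\<lambda>\<omega>. contrast (Y \<omega>) t) > 0"
proof -
  have "integrable lborel f"
    using distributed_integrable[OF Y, of "\<lambda>_. 1"] assms(2) by simp
  then have "(\<integral>x. f x * contrast x t \<partial>lborel) > 0"
    using assms(3-5) by (rule integral_contrast_pos)
  then show ?thesis
    using distributed_integral[OF Y, of "\<lambda>x. contrast x t"] assms(2) by simp
qed

lemma (in prob_space) prob_abs_le_tendsto_1:
  fixes Y :: "'a \<Rightarrow> real"
  assumes [measurable]: "random_variable borel Y"
  shows "(\<lambda>k. prob {\<omega>\<in>space M. \<bar>Y \<omega>\<bar> \<le> real k}) \<longlonglongrightarrow> 1"
proof -
  have "(\<lambda>k. prob {\<omega>\<in>space M. \<bar>Y \<omega>\<bar> \<le> real k})
      \<longlonglongrightarrow> prob (\<Union>k. {\<omega>\<in>space M. \<bar>Y \<omega>\<bar> \<le> real k})"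
    by (rule finite_Lim_measure_incseq) (auto simp: incseq_def)
  also have "(\<Union>k. {\<omega>\<in>space M. \<bar>Y \<omega>\<bar> \<le> real k}) = space M"
    by (auto intro: real_arch_simple)
  finally show ?thesis by (simp add: prob_space)
qed

lemma AE_eventually_gt_if_AE_tendsto:
  fixes f :: "'a \<Rightarrow> 'b \<Rightarrow> 'c::order_topology"
  assumes "AE x in M. (f x \<longlongrightarrow> l) F" and "a < l"
  shows "AE x in M. eventually (\<lambda>n. a < f x n) F"
  using assms(1)
proof (rule eventually_mono)
  fix x assume "(f x \<longlongrightarrow> l) F"
  then show "eventually (\<lambda>n. a < f x n) F" using assms(2) by (rule order_tendstoD(1))
qed

locale iid_real_sequence = prob_space +
  fixes X :: "nat \<Rightarrow> 'a \<Rightarrow> real"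
  assumes indep: "indep_vars (\<lambda>_. borel) X {1..}"
    and ident: "\<And>i. i \<ge> 1 \<Longrightarrow> distr M borel (X i) = distr M borel (X 1)"
begin

lemma random_variable [measurable]: "i \<ge> 1 \<Longrightarrow> random_variable borel (X i)"
  using indep unfolding indep_vars_def by auto

lemma random_variable_1 [measurable]: "random_variable borel (X 1)"
  by (rule random_variable) simp

lemma prob_average_deviation_le:
  fixes \<phi> :: "real \<Rightarrow> real"
  assumes [measurable]: "\<phi> \<in> borel_measurable borel"
    and bound: "\<And>x. \<bar>\<phi> x\<bar> \<le> B" and "\<epsilon> \<ge> 0" and "n > 0"
  shows "prob {\<omega>\<in>space M. \<epsilon> \<le> \<bar>(\<Sum>i=1..n. \<phi> (X i \<omega>)) / real n - expectation (\<lambda>\<omega>. \<phi> (X 1 \<omega>))\<bar>}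
    \<le> 2 * exp (real n * (- 2 * \<epsilon>\<^sup>2 / (2 * B + 2)\<^sup>2))"
proof -
  have B: "B \<ge> 0" using bound[of 0] by linarith
  interpret H: Hoeffding_ineq_iid M "{1..n}" "\<lambda>i \<omega>. \<phi> (X i \<omega>)" "\<lambda>\<omega>. \<phi> (X 1 \<omega>)" "- B - 1" "B + 1"
    "expectation (\<lambda>\<omega>. \<phi> (X 1 \<omega>))"
  proof unfold_locales
    have "indep_vars (\<lambda>_. borel) X {1..n}"
      by (rule indep_vars_subset[OF indep]) auto
    then show "indep_vars (\<lambda>_. borel) (\<lambda>i \<omega>. \<phi> (X i \<omega>)) {1..n}"
      by (rule indep_vars_compose2[where M'="\<lambda>_. borel"]) simp
    fix i assume "i \<in> {1..n}"
    then have "i \<ge> 1" by simp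
    have "distr M borel (\<lambda>\<omega>. \<phi> (X i \<omega>)) = distr (distr M borel (X i)) borel \<phi>"
      using \<open>i \<ge> 1\<close> by (simp add: distr_distr comp_def)
    also have "\<dots> = distr (distr M borel (X 1)) borel \<phi>"
      by (simp only: ident[OF \<open>i \<ge> 1\<close>])
    also have "\<dots> = distr M borel (\<lambda>\<omega>. \<phi> (X 1 \<omega>))"
      by (simp add: distr_distr comp_def)
    finally show "distr M borel (\<lambda>\<omega>. \<phi> (X i \<omega>)) = distr M borel (\<lambda>\<omega>. \<phi> (X 1 \<omega>))" .
  next
    have "\<phi> x \<in> {- B - 1..B + 1}" for x
      using bound[of x] by (simp add: abs_le_iff)
    then show "AE \<omega> in M. \<phi> (X 1 \<omega>) \<in> {- B - 1..B + 1}" by simp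
  qed simp_all
  have "prob {\<omega>\<in>space M. \<epsilon> \<le> \<bar>(\<Sum>i=1..n. \<phi> (X i \<omega>)) / real n - expectation (\<lambda>\<omega>. \<phi> (X 1 \<omega>))\<bar>}
      = prob {\<omega>\<in>space M. \<bar>(\<Sum>i\<in>{1..n}. \<phi> (X i \<omega>)) / real (card {1..n})
          - expectation (\<lambda>\<omega>. \<phi> (X 1 \<omega>))\<bar> \<ge> \<epsilon>}"
    by simp
  also have "\<dots> \<le> 2 * exp (-2 * real (card {1..n}) * \<epsilon>\<^sup>2 / (B + 1 - (- B - 1))\<^sup>2)"
    by (rule H.Hoeffding_ineq_abs_ge') (use assms(3,4) B in auto)
  also have "\<dots> = 2 * exp (real n * (- 2 * \<epsilon>\<^sup>2 / (2 * B + 2)\<^sup>2))"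
    by (simp add: mult_ac add_ac)
  finally show ?thesis .
qed

lemma AE_eventually_average_close:
  fixes \<phi> :: "real \<Rightarrow> real"
  assumes [measurable]: "\<phi> \<in> borel_measurable borel"
    and bound: "\<And>x. \<bar>\<phi> x\<bar> \<le> B" and "\<epsilon> > 0"
  shows "AE \<omega> in M. eventually (\<lambda>n.
    \<bar>(\<Sum>i=1..n. \<phi> (X i \<omega>)) / real n - expectation (\<lambda>\<omega>. \<phi> (X 1 \<omega>))\<bar> < \<epsilon>) sequentially"
proof -
  define A where "A n = {\<omega>\<in>space M.
    \<epsilon> \<le> \<bar>(\<Sum>i=1..n. \<phi> (X i \<omega>)) / real n - expectation (\<lambda>\<omega>. \<phi> (X 1 \<omega>))\<bar>}" for n
  define q where "q = exp (- 2 * \<epsilon>\<^sup>2 / (2 * B + 2)\<^sup>2)"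
  have q: "0 < q" "q < 1" using bound[of 0] \<open>\<epsilon> > 0\<close> unfolding q_def by auto
  have A_le: "prob (A n) \<le> 2 * q ^ n" for n
  proof (cases "n = 0")
    case True
    have "prob (A n) \<le> 1" by simp
    moreover have "2 * q ^ n = 2" using True by simp
    ultimately show ?thesis by linarith
  next
    case False
    have "prob (A n) \<le> 2 * exp (real n * (- 2 * \<epsilon>\<^sup>2 / (2 * B + 2)\<^sup>2))"
      unfolding A_def using False \<open>\<epsilon> > 0\<close>
      by (intro prob_average_deviation_le[OF assms(1) bound]) auto
    then show ?thesis by (simp only: q_def exp_of_nat_mult)
  qed
  have "summable (\<lambda>n. prob (A n))"
    by (rule summable_comparison_test'[where g="\<lambda>n. 2 * q ^ n"])
      (use A_le q in \<open>auto intro!: summable_mult summable_geometric\<close>)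
  then have "AE \<omega> in M. eventually (\<lambda>n. \<omega> \<in> space M - A n) sequentially"
    by (intro borel_cantelli_AE1) (auto simp: A_def less_top[symmetric])
  then show ?thesis
    by (rule AE_mp) (auto simp: A_def not_le intro!: AE_I2 elim: eventually_mono)
qed

lemma strong_law_bounded:
  fixes \<phi> :: "real \<Rightarrow> real"
  assumes [measurable]: "\<phi> \<in> borel_measurable borel" and "\<And>x. \<bar>\<phi> x\<bar> \<le> B"
  shows "AE \<omega> in M. (\<lambda>n. (\<Sum>i=1..n. \<phi> (X i \<omega>)) / real n) \<longlonglongrightarrow> expectation (\<lambda>\<omega>. \<phi> (X 1 \<omega>))"
proof -
  have "AE \<omega> in M. \<forall>k. eventually (\<lambda>n. \<bar>(\<Sum>i=1..n. \<phi> (X i \<omega>)) / real n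
      - expectation (\<lambda>\<omega>. \<phi> (X 1 \<omega>))\<bar> < 1 / Suc k) sequentially"
    by (subst AE_all_countable) (intro allI AE_eventually_average_close[OF assms]; simp)
  then show ?thesis
  proof (rule AE_mp, intro AE_I2 impI tendstoI)
    fix \<omega> and e :: real
    assume close: "\<forall>k. eventually (\<lambda>n. \<bar>(\<Sum>i=1..n. \<phi> (X i \<omega>)) / real n
      - expectation (\<lambda>\<omega>. \<phi> (X 1 \<omega>))\<bar> < 1 / Suc k) sequentially" and "e > 0"
    then obtain k where "1 / Suc k < e" using nat_approx_posE by blast
    with close[rule_format, of k] show "eventually (\<lambda>n. dist ((\<Sum>i=1..n. \<phi> (X i \<omega>)) / real n)
      (expectation (\<lambda>\<omega>. \<phi> (X 1 \<omega>))) < e) sequentially"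
      by (auto simp: dist_real_def elim: eventually_mono)
  qed
qed

lemma AE_eventually_mean_contrast_pos_compact:
  assumes S: "compact S" and pos: "\<And>s. s \<in> S \<Longrightarrow> expectation (\<lambda>\<omega>. contrast (X 1 \<omega>) s) > 0"
  shows "AE \<omega> in M. eventually (\<lambda>n. \<forall>t\<in>S. mean_contrast (\<lambda>i. X i \<omega>) n t > 0) sequentially"
proof -
  define G where "G s = expectation (\<lambda>\<omega>. contrast (X 1 \<omega>) s)" for s
  have "S \<subseteq> (\<Union>s\<in>S. ball s (G s / 2))"
    using pos by (force simp: G_def)
  then obtain F where F: "F \<subseteq> S" "finite F" "S \<subseteq> (\<Union>s\<in>F. ball s (G s / 2))"
    using compactE_image[OF S, of S "\<lambda>s. ball s (G s / 2)"] by blast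
  have "AE \<omega> in M. \<forall>s\<in>F. eventually (\<lambda>n. mean_contrast (\<lambda>i. X i \<omega>) n s > G s / 2) sequentially"
  proof (rule AE_finite_allI[OF F(2)])
    fix s assume "s \<in> F"
    then have "G s / 2 < G s" using F(1) pos by (auto simp: G_def)
    have "AE \<omega> in M. (\<lambda>n. mean_contrast (\<lambda>i. X i \<omega>) n s) \<longlonglongrightarrow> G s"
      unfolding mean_contrast_def G_def by (rule strong_law_bounded) (auto intro: abs_contrast_le)
    then show "AE \<omega> in M. eventually (\<lambda>n. mean_contrast (\<lambda>i. X i \<omega>) n s > G s / 2) sequentially"
      using \<open>G s / 2 < G s\<close> by (rule AE_eventually_gt_if_AE_tendsto)
  qed
  then show ?thesis
  proof (rule AE_mp, intro AE_I2 impI)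
    fix \<omega> assume "\<forall>s\<in>F. eventually (\<lambda>n. mean_contrast (\<lambda>i. X i \<omega>) n s > G s / 2) sequentially"
    then have "eventually (\<lambda>n. \<forall>s\<in>F. mean_contrast (\<lambda>i. X i \<omega>) n s > G s / 2) sequentially"
      using F(2) by (simp add: eventually_ball_finite_distrib)
    then show "eventually (\<lambda>n. \<forall>t\<in>S. mean_contrast (\<lambda>i. X i \<omega>) n t > 0) sequentially"
    proof (rule eventually_mono, intro ballI)
      fix n t assume near: "\<forall>s\<in>F. mean_contrast (\<lambda>i. X i \<omega>) n s > G s / 2" and "t \<in> S"
      with F(3) obtain s where "s \<in> F" and st: "\<bar>t - s\<bar> < G s / 2"
        by (auto simp: dist_real_def abs_minus_commute)
      then have "G s / 2 < mean_contrast (\<lambda>i. X i \<omega>) n s" using near by blast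
      moreover have "mean_contrast (\<lambda>i. X i \<omega>) n s - mean_contrast (\<lambda>i. X i \<omega>) n t \<le> \<bar>t - s\<bar>"
        using mean_contrast_lipschitz[of "\<lambda>i. X i \<omega>" n t s] by (simp add: abs_le_iff)
      ultimately show "mean_contrast (\<lambda>i. X i \<omega>) n t > 0" using st by linarith
    qed
  qed
qed

lemma AE_eventually_mean_contrast_pos_far:
  obtains T where "AE \<omega> in M. eventually (\<lambda>n.
    \<forall>t. T \<le> \<bar>t\<bar> \<longrightarrow> mean_contrast (\<lambda>i. X i \<omega>) n t > 0) sequentially"
proof -
  obtain k :: nat where "prob {\<omega>\<in>space M. \<bar>X 1 \<omega>\<bar> \<le> real k} > 2/3"
    using order_tendstoD(1)[OF prob_abs_le_tendsto_1[OF random_variable_1], of "2/3"]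
    by (auto simp: eventually_sequentially)
  then obtain K where K: "K \<ge> 0" and K_prob: "prob {\<omega>\<in>space M. \<bar>X 1 \<omega>\<bar> \<le> K} > 2/3"
    by (intro that[of "real k"]) auto
  have E: "expectation (\<lambda>\<omega>. of_bool (\<bar>X 1 \<omega>\<bar> \<le> K)) = prob {\<omega>\<in>space M. \<bar>X 1 \<omega>\<bar> \<le> K}"
  proof -
    have "expectation (\<lambda>\<omega>. of_bool (\<bar>X 1 \<omega>\<bar> \<le> K))
        = expectation (indicator {\<omega>\<in>space M. \<bar>X 1 \<omega>\<bar> \<le> K})"
      by (rule Bochner_Integration.integral_cong) (auto simp: indicator_def)
    also have "\<dots> = prob {\<omega>\<in>space M. \<bar>X 1 \<omega>\<bar> \<le> K}"
      by simp
    finally show ?thesis .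
  qed
  have "AE \<omega> in M. (\<lambda>n. (\<Sum>i=1..n. of_bool (\<bar>X i \<omega>\<bar> \<le> K)) / real n)
      \<longlonglongrightarrow> expectation (\<lambda>\<omega>. of_bool (\<bar>X 1 \<omega>\<bar> \<le> K))"
    by (rule strong_law_bounded[where B=1]) auto
  then have "AE \<omega> in M. eventually (\<lambda>n. 2/3 < (\<Sum>i=1..n. of_bool (\<bar>X i \<omega>\<bar> \<le> K)) / real n) sequentially"
    using K_prob unfolding E by (rule AE_eventually_gt_if_AE_tendsto)
  then have "AE \<omega> in M. eventually (\<lambda>n. \<forall>t. K + 2 * (1 + K\<^sup>2)\<^sup>2 \<le> \<bar>t\<bar>
      \<longrightarrow> mean_contrast (\<lambda>i. X i \<omega>) n t > 0) sequentially"
    by (elim eventually_mono) (blast intro: mean_contrast_pos_far[OF K])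
  then show thesis by (rule that)
qed

lemma AE_eventually_mean_contrast_pos:
  assumes pos: "\<And>t. t \<noteq> 0 \<Longrightarrow> expectation (\<lambda>\<omega>. contrast (X 1 \<omega>) t) > 0" and "\<epsilon> > 0"
  shows "AE \<omega> in M. eventually (\<lambda>n.
    \<forall>t. \<epsilon> \<le> \<bar>t\<bar> \<longrightarrow> mean_contrast (\<lambda>i. X i \<omega>) n t > 0) sequentially"
proof -
  obtain T where far: "AE \<omega> in M. eventually (\<lambda>n.
      \<forall>t. T \<le> \<bar>t\<bar> \<longrightarrow> mean_contrast (\<lambda>i. X i \<omega>) n t > 0) sequentially"
    by (rule AE_eventually_mean_contrast_pos_far)
  have "compact {t. \<epsilon> \<le> \<bar>t\<bar> \<and> \<bar>t\<bar> \<le> T}"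
    unfolding compact_eq_bounded_closed
    by (auto intro!: closed_Collect_conj closed_Collect_le continuous_intros simp: bounded_iff)
  then have near: "AE \<omega> in M. eventually (\<lambda>n.
      \<forall>t\<in>{t. \<epsilon> \<le> \<bar>t\<bar> \<and> \<bar>t\<bar> \<le> T}. mean_contrast (\<lambda>i. X i \<omega>) n t > 0) sequentially"
    by (rule AE_eventually_mean_contrast_pos_compact) (use pos \<open>\<epsilon> > 0\<close> in auto)
  from far near show ?thesis
  proof eventually_elim
    case (elim \<omega>)
    then show ?case
      by eventually_elim (metis linorder_le_cases mem_Collect_eq)
  qed
qed

lemma AE_minimizer_set_eventually_subset:
  assumes "\<And>t. t \<noteq> 0 \<Longrightarrow> expectation (\<lambda>\<omega>. contrast (X 1 \<omega>) t) > 0"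
  shows "AE \<omega> in M. \<forall>\<epsilon>>0. \<exists>N. \<forall>n>N. minimizer_set X n \<omega> \<subseteq> {-\<epsilon>..\<epsilon>}"
proof -
  have "AE \<omega> in M. \<forall>k. eventually (\<lambda>n.
      \<forall>t. 1 / Suc k \<le> \<bar>t\<bar> \<longrightarrow> mean_contrast (\<lambda>i. X i \<omega>) n t > 0) sequentially"
    using assms by (subst AE_all_countable) (auto intro!: AE_eventually_mean_contrast_pos)
  then show ?thesis
  proof (rule AE_mp, intro AE_I2 impI allI)
    fix \<omega> and \<epsilon> :: real
    assume ev: "\<forall>k. eventually (\<lambda>n.
      \<forall>t. 1 / Suc k \<le> \<bar>t\<bar> \<longrightarrow> mean_contrast (\<lambda>i. X i \<omega>) n t > 0) sequentially"
      and "\<epsilon> > 0"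
    then obtain k where k: "1 / Suc k < \<epsilon>" using nat_approx_posE by blast
    obtain N where "\<And>n t. n \<ge> N \<Longrightarrow> 1 / Suc k \<le> \<bar>t\<bar> \<Longrightarrow> mean_contrast (\<lambda>i. X i \<omega>) n t > 0"
      using ev[rule_format, of k] by (auto simp: eventually_sequentially)
    with k show "\<exists>N. \<forall>n>N. minimizer_set X n \<omega> \<subseteq> {-\<epsilon>..\<epsilon>}"
      by (intro exI[of _ N] allI impI minimizer_set_subset_if_mean_contrast_pos) auto
  qed
qed

end

lemma pvii_density_even: "pvii_density m (- x) = pvii_density m x"
  by (simp add: pvii_density_def)

lemma pvii_density_pos:
  assumes "pvii_const m > 0"
  shows "pvii_density m x > 0"
proof -
  have "0 < 1 + x\<^sup>2" by (simp add: add_pos_nonneg)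
  then show ?thesis using assms by (simp add: pvii_density_def)
qed

lemma pvii_density_strict_decreasing:
  assumes "pvii_const m > 0" "m > 0" "\<bar>x\<bar> < \<bar>y\<bar>"
  shows "pvii_density m y < pvii_density m x"
proof -
  have "x\<^sup>2 < y\<^sup>2" using assms(3) by (meson abs_le_square_iff not_le)
  then have "(1 + y\<^sup>2) powr (- m) < (1 + x\<^sup>2) powr (- m)"
    using assms(2) by (intro powr_less_mono2_neg) (auto simp: add_pos_nonneg)
  then show ?thesis using assms(1) by (simp add: pvii_density_def)
qed

lemma (in prob_space) pvii_const_pos:
  assumes "distributed M lborel Y (\<lambda>x. ennreal (pvii_density m x))"
  shows "pvii_const m > 0"
proof (rule ccontr)
  assume "\<not> pvii_const m > 0"
  moreover have "pvii_const m \<ge> 0" by (simp add: pvii_const_def)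
  ultimately have "(\<lambda>x. ennreal (pvii_density m x)) = (\<lambda>x. 0)" by (simp add: pvii_density_def)
  then have "distr M lborel Y = density lborel (\<lambda>x. 0)"
    using distributed_distr_eq_density[OF assms] by simp
  then have "emeasure (distr M lborel Y) UNIV = 0" by (simp add: emeasure_density)
  moreover have "emeasure (distr M lborel Y) UNIV = emeasure M (Y -` UNIV \<inter> space M)"
    using distributed_measurable[OF assms] by (intro emeasure_distr) auto
  ultimately show False by (simp add: emeasure_space_1)
qed

theorem proposition2p7:
  fixes M :: "'a measure" and X :: "nat \<Rightarrow> 'a \<Rightarrow> real" and m :: real
  assumes "prob_space M"
    and "m > 1/2"
    and "prob_space.indep_vars M (\<lambda>_. borel) X {1..}"
    and "\<And>i. i \<ge> 1 \<Longrightarrow> distributed M lborel (X i) (\<lambda>x. ennreal (pvii_density m x))"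
  shows "AE \<omega> in M. \<forall>\<epsilon>>0. \<exists>N::nat. \<forall>n>N. minimizer_set X n \<omega> \<subseteq> {-\<epsilon>..\<epsilon>}"
proof -
  interpret prob_space M by (rule assms(1))
  have c: "pvii_const m > 0"
    by (rule pvii_const_pos[of "X 1"]) (simp add: assms(4))
  have "distr M borel (X i) = distr M borel (X 1)" if "i \<ge> 1" for i
  proof -
    have "distr M lborel (X i) = distr M lborel (X 1)"
      using distributed_distr_eq_density[OF assms(4)] that by simp
    then show ?thesis by (simp cong: distr_cong)
  qed
  with assms(3) interpret iid_real_sequence M X
    by unfold_locales
  show ?thesis
  proof (rule AE_minimizer_set_eventually_subset)
    fix t :: real assume "t \<noteq> 0"
    have "distributed M lborel (X 1) (\<lambda>x. ennreal (pvii_density m x))"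
      by (simp add: assms(4))
    then show "expectation (\<lambda>\<omega>. contrast (X 1 \<omega>) t) > 0"
      by (rule expectation_contrast_pos)
        (use c assms(2) \<open>t \<noteq> 0\<close> in \<open>auto simp: pvii_density_even
          intro: pvii_density_strict_decreasing less_imp_le[OF pvii_density_pos]\<close>)
  qed
qed

end
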